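(* Let $W$ be a graphon satisfying the Regularity Condition. There exists $\varepsilon'>0$ such that $\det M(y)>\varepsilon'$ for all $y\in[0,1]^2$.
   Context: A graphon is a symmetric measurable $W:[0,1]^2\to[0,1]$; $D(x)=\int_0^1W(x,y)dy$. Regularity Condition: $W\in\mathcal{C}^3([0,1]^2)$, $D'>0$, $W\le1-\varepsilon_0$ and $D\ge\varepsilon_0$ for some $\varepsilon_0\in(0,1/2)$. For $y=(y_1,y_2)\in[0,1]^2$, $M(y)$ is the $2\times2$ symmetric matrix with diagonal entries $D(y_1)(1-D(y_1))$, $D(y_2)(1-D(y_2))$ and off-diagonal entries $\int_0^1W(y_1,z)W(y_2,z)dz-D(y_1)D(y_2)$. *)

theory Defs
  imports "HOL-Analysis.Analysis"
begin

text \<open>A graphon is represented by W :: real => real => real; only its values on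
the unit square matter.\<close>

definition graphon :: "(real \<Rightarrow> real \<Rightarrow> real) \<Rightarrow> bool" where
  "graphon W \<longleftrightarrow>
     (\<forall>x\<in>{0..1}. \<forall>y\<in>{0..1}. W x y = W y x) \<and>
     (\<forall>x\<in>{0..1}. \<forall>y\<in>{0..1}. 0 \<le> W x y \<and> W x y \<le> 1) \<and>
     set_borel_measurable lborel ({0..1::real} \<times> {0..1::real}) (\<lambda>(x, y). W x y)"

definition degree_fun :: "(real \<Rightarrow> real \<Rightarrow> real) \<Rightarrow> real \<Rightarrow> real" where
  "degree_fun W x = integral {0..1} (\<lambda>y. W x y)"

text \<open>C^k on a set S of the plane: all partial derivatives up to order k exist
(as derivatives within S, i.e. one-sided at the boundary) and are continuous on S.\<close>
fun Ck_on :: "nat \<Rightarrow> (real \<times> real) set \<Rightarrow> (real \<times> real \<Rightarrow> real) \<Rightarrow> bool" where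
  "Ck_on 0 S f = continuous_on S f"
| "Ck_on (Suc k) S f = (continuous_on S f \<and>
     (\<exists>f1 f2. (\<forall>p\<in>S. (f has_derivative (\<lambda>h. f1 p * fst h + f2 p * snd h)) (at p within S))
             \<and> Ck_on k S f1 \<and> Ck_on k S f2))"

definition regularity_condition :: "(real \<Rightarrow> real \<Rightarrow> real) \<Rightarrow> bool" where
  "regularity_condition W \<longleftrightarrow>
     Ck_on 3 ({0..1} \<times> {0..1}) (\<lambda>(x, y). W x y) \<and>
     (\<forall>x\<in>{0..1}. \<exists>d>0. (degree_fun W has_real_derivative d) (at x within {0..1})) \<and>
     (\<exists>\<epsilon>0::real. 0 < \<epsilon>0 \<and> \<epsilon>0 < 1/2 \<and>
        (\<forall>x\<in>{0..1}. \<forall>y\<in>{0..1}. W x y \<le> 1 - \<epsilon>0) \<and>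
        (\<forall>x\<in>{0..1}. \<epsilon>0 \<le> degree_fun W x))"

definition Mmat :: "(real \<Rightarrow> real \<Rightarrow> real) \<Rightarrow> real \<times> real \<Rightarrow> real^2^2" where
  "Mmat W y = (let D = degree_fun W; y1 = fst y; y2 = snd y;
       c = integral {0..1} (\<lambda>z. W y1 z * W y2 z) - D y1 * D y2
     in vector [vector [D y1 * (1 - D y1), c], vector [c, D y2 * (1 - D y2)]])"

end

theory Submission
  imports Defs
begin

text \<open>Fix \<open>y = (y1, y2)\<close>, put \<open>f = W y1\<close>, \<open>g = W y2\<close> and \<open>a = \<integral>f\<close>, \<open>b = \<integral>g\<close>, \<open>c = \<integral>f g\<close>.
Then \<open>M(y)\<close> is the covariance matrix of a pair of Bernoulli variables whose two-by-two table
has cells \<open>p11 = c\<close>, \<open>p10 = \<integral>f (1 - g) = a - c\<close>, \<open>p01 = \<integral>(1 - f) g = b - c\<close> and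
\<open>p00 = \<integral>(1 - f)(1 - g) = 1 - a - b + c\<close>, and its determinant is
\<open>p00 p10 p01 + p11 (p00 p10 + p00 p01 + p10 p01)\<close>.
From \<open>W \<le> 1 - \<epsilon>0\<close> and \<open>D \<ge> \<epsilon>0\<close> one gets \<open>p11 \<ge> 0\<close> and \<open>p00, p10, p01 \<ge> \<epsilon>0\<^sup>2\<close>, hence
\<open>det M(y) \<ge> \<epsilon>0\<^sup>6\<close>.\<close>

lemma bernoulli_cov_det_eq:
  fixes a b c :: real
  shows "a * (1 - a) * (b * (1 - b)) - (c - a * b)\<^sup>2 =
    (1 - a - b + c) * (a - c) * (b - c)
    + c * ((1 - a - b + c) * (a - c) + (1 - a - b + c) * (b - c) + (a - c) * (b - c))"
  by (simp add: algebra_simps power2_eq_square)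

lemma bernoulli_cov_det_ge:
  fixes a b c e :: real
  assumes "e\<^sup>2 \<le> 1 - a - b + c" and "e\<^sup>2 \<le> a - c" and "e\<^sup>2 \<le> b - c" and "0 \<le> c"
  shows "e ^ 6 \<le> a * (1 - a) * (b * (1 - b)) - (c - a * b)\<^sup>2"
proof -
  have p00: "0 \<le> 1 - a - b + c" and p10: "0 \<le> a - c" and p01: "0 \<le> b - c"
    using assms(1-3) zero_le_power2[of e] by linarith+
  have "e ^ 6 = e\<^sup>2 * e\<^sup>2 * e\<^sup>2"
    by (simp add: eval_nat_numeral)
  also have "\<dots> \<le> (1 - a - b + c) * (a - c) * (b - c)"
    using assms p00 p10 by (intro mult_mono) auto
  also have "\<dots> \<le> a * (1 - a) * (b * (1 - b)) - (c - a * b)\<^sup>2"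
  proof -
    have "0 \<le> c * ((1 - a - b + c) * (a - c) + (1 - a - b + c) * (b - c) + (a - c) * (b - c))"
      by (intro mult_nonneg_nonneg add_nonneg_nonneg assms(4) p00 p10 p01)
    then show ?thesis
      unfolding bernoulli_cov_det_eq by linarith
  qed
  finally show ?thesis .
qed

lemma continuous_on_slice:
  assumes "continuous_on (A \<times> B) (\<lambda>(x, y). W x y)" and "u \<in> A"
  shows "continuous_on B (W u)"
proof -
  have "continuous_on B ((\<lambda>(x, y). W x y) \<circ> Pair u)"
    using assms by (intro continuous_on_compose continuous_intros)
      (auto elim: continuous_on_subset)
  then show ?thesis
    by (simp add: o_def)
qed

lemma integral_mult_complement_ge:
  fixes f g :: "'a::euclidean_space \<Rightarrow> real"
  assumes "f integrable_on S" and "(\<lambda>z. f z * g z) integrable_on S"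
    and "\<And>z. z \<in> S \<Longrightarrow> 0 \<le> f z" and "\<And>z. z \<in> S \<Longrightarrow> g z \<le> 1 - e"
  shows "e * integral S f \<le> integral S f - integral S (\<lambda>z. f z * g z)"
proof -
  have "integral S (\<lambda>z. e * f z) \<le> integral S (\<lambda>z. f z - f z * g z)"
  proof (rule integral_le)
    show "(\<lambda>z. e * f z) integrable_on S"
      using integrable_on_cmult_left[OF assms(1), of e] by simp
    show "(\<lambda>z. f z - f z * g z) integrable_on S"
      using assms(1,2) by (rule integrable_diff)
    fix z
    assume "z \<in> S"
    then have "f z * e \<le> f z * (1 - g z)"
      using assms(3,4)[of z] by (intro mult_left_mono) auto
    then show "e * f z \<le> f z - f z * g z"
      by (simp add: algebra_simps)
  qed
  then show ?thesis
    using assms(1,2) by (simp add: integral_diff)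
qed

lemma integral_complements_product_ge:
  fixes f g :: "real \<Rightarrow> real"
  assumes "f integrable_on {0..1}" and "g integrable_on {0..1}"
    and "(\<lambda>z. f z * g z) integrable_on {0..1}" and "0 \<le> e"
    and "\<And>z. z \<in> {0..1} \<Longrightarrow> f z \<le> 1 - e" and "\<And>z. z \<in> {0..1} \<Longrightarrow> g z \<le> 1 - e"
  shows "e\<^sup>2 \<le> 1 - integral {0..1} f - integral {0..1} g + integral {0..1} (\<lambda>z. f z * g z)"
proof (rule has_integral_le)
  have const: "((\<lambda>z. k) has_integral k) {0..1::real}" for k :: real
    using has_integral_const_real[of k 0 1] by simp
  then show "((\<lambda>z::real. e\<^sup>2) has_integral e\<^sup>2) {0..1}" .
  show "((\<lambda>z. 1 - f z - g z + f z * g z) has_integral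
      1 - integral {0..1} f - integral {0..1} g + integral {0..1} (\<lambda>z. f z * g z)) {0..1}"
    using assms(1-3) by (intro has_integral_add has_integral_diff const integrable_integral)
  fix z :: real
  assume "z \<in> {0..1}"
  then have "e * e \<le> (1 - f z) * (1 - g z)"
    using assms(4) assms(5,6)[of z] by (intro mult_mono) auto
  then show "e\<^sup>2 \<le> 1 - f z - g z + f z * g z"
    by (simp add: algebra_simps power2_eq_square)
qed

lemma integral_product_cov_det_ge:
  fixes f g :: "real \<Rightarrow> real"
  assumes "continuous_on {0..1} f" and "continuous_on {0..1} g" and "0 \<le> e"
    and "\<And>z. z \<in> {0..1} \<Longrightarrow> 0 \<le> f z \<and> f z \<le> 1 - e"
    and "\<And>z. z \<in> {0..1} \<Longrightarrow> 0 \<le> g z \<and> g z \<le> 1 - e"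
    and "e \<le> integral {0..1} f" and "e \<le> integral {0..1} g"
  defines "a \<equiv> integral {0..1} f" and "b \<equiv> integral {0..1} g"
    and "c \<equiv> integral {0..1} (\<lambda>z. f z * g z)"
  shows "e ^ 6 \<le> a * (1 - a) * (b * (1 - b)) - (c - a * b)\<^sup>2"
proof (rule bernoulli_cov_det_ge)
  have f_int: "f integrable_on {0..1}" and g_int: "g integrable_on {0..1}"
    and fg_int: "(\<lambda>z. f z * g z) integrable_on {0..1}"
    using assms(1,2) continuous_on_mult[OF assms(1,2)] by (auto intro: integrable_continuous_interval)
  have gf_int: "(\<lambda>z. g z * f z) integrable_on {0..1}"
    using fg_int by (simp add: mult.commute)
  show "e\<^sup>2 \<le> 1 - a - b + c"
    unfolding a_def b_def c_def
    using f_int g_int fg_int assms(3-5) by (intro integral_complements_product_ge) auto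
  have "e\<^sup>2 \<le> e * a" and "e\<^sup>2 \<le> e * b"
    unfolding power2_eq_square a_def b_def using assms(3,6,7) by (auto intro: mult_left_mono)
  moreover have "e * a \<le> a - c"
    unfolding a_def c_def using f_int fg_int assms(4,5) by (intro integral_mult_complement_ge) auto
  moreover have "e * b \<le> b - c"
    using integral_mult_complement_ge[OF g_int gf_int] assms(4,5)
    unfolding b_def c_def by (simp add: mult.commute)
  ultimately show "e\<^sup>2 \<le> a - c" and "e\<^sup>2 \<le> b - c"
    by linarith+
  show "0 \<le> c"
    unfolding c_def using fg_int assms(4,5) by (intro integral_nonneg) auto
qed

lemma det_Mmat:
  "det (Mmat W (y1, y2)) =
    degree_fun W y1 * (1 - degree_fun W y1) * (degree_fun W y2 * (1 - degree_fun W y2))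
    - (integral {0..1} (\<lambda>z. W y1 z * W y2 z) - degree_fun W y1 * degree_fun W y2)\<^sup>2"
  unfolding Mmat_def Let_def det_2 by (simp add: power2_eq_square)

theorem lemma11p1:
  fixes W :: "real \<Rightarrow> real \<Rightarrow> real"
  assumes "graphon W" and "regularity_condition W"
  shows "\<exists>\<epsilon>'>0. \<forall>y\<in>{0..1} \<times> {0..1}. det (Mmat W y) > \<epsilon>'"
proof -
  obtain e0 :: real where "0 < e0"
    and W_le: "\<forall>x\<in>{0..1}. \<forall>y\<in>{0..1}. W x y \<le> 1 - e0"
    and D_ge: "\<forall>x\<in>{0..1}. e0 \<le> degree_fun W x"
    using assms(2) unfolding regularity_condition_def by blast
  have W_cont: "continuous_on ({0..1} \<times> {0..1}) (\<lambda>(x, y). W x y)"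
    using assms(2) unfolding regularity_condition_def numeral_3_eq_3 by simp
  have W_ge: "\<forall>x\<in>{0..1}. \<forall>y\<in>{0..1}. 0 \<le> W x y"
    using assms(1) unfolding graphon_def by blast
  have det_ge: "e0 ^ 6 \<le> det (Mmat W (y1, y2))" if "y1 \<in> {0..1}" and "y2 \<in> {0..1}" for y1 y2
    unfolding det_Mmat
  proof (rule integral_product_cov_det_ge[where f = "W y1" and g = "W y2", folded degree_fun_def])
    show "continuous_on {0..1} (W y1)" and "continuous_on {0..1} (W y2)"
      using that by (simp_all add: continuous_on_slice[OF W_cont])
  qed (use that W_le W_ge D_ge \<open>0 < e0\<close> in auto)
  show ?thesis
  proof (intro exI[of _ "e0 ^ 6 / 2"] conjI ballI)
    show "0 < e0 ^ 6 / 2"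
      using \<open>0 < e0\<close> by simp
    fix y :: "real \<times> real"
    assume "y \<in> {0..1} \<times> {0..1}"
    then have "e0 ^ 6 \<le> det (Mmat W y)"
      using det_ge[of "fst y" "snd y"] by (simp add: mem_Times_iff)
    then show "e0 ^ 6 / 2 < det (Mmat W y)"
      using zero_less_power[OF \<open>0 < e0\<close>, of 6] by linarith
  qed
qed

end
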